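(* Consider the parking problem on the infinite square grid in the model described in the context. Suppose the initial configuration $C(0)$ belongs to the class $\mathcal I_{223}$, i.e.: the set of parking nodes (with their capacities) is symmetric with respect to a unique line of symmetry $l$, the configuration $C(0)$ itself is symmetric with respect to $l$, no robot lies on a node of $l$, and at least one parking node lies on $l$. If the capacity of a parking node lying on $l$ is an odd integer, then the parking problem is unsolvable from $C(0)$.
   Context: The deployment region is the infinite square grid $G=P\times P$, where $P$ is the infinite path on $\mathbb Z$, embedded in the plane. A finite set $\mathcal P=\{p_1,\dots,p_m\}$ of distinct grid nodes are parking nodes; each $p_i$ has a capacity $k_i\ge 1$ known to all robots (maximum number of robots it may accommodate). There are $n=\sum_i k_i$ robots initially at pairwise distinct nodes. Robots are anonymous, autonomous, identical, homogeneous (same deterministic algorithm), oblivious, silent, disoriented (no common coordinate axes, no common chirality), have global visibility and global-strong multiplicity detection (they see the exact number of robots at every node). They act in Look-Compute-Move cycles under a fair asynchronous scheduler; a move goes to one of the four neighbours (or stays) and is instantaneous. The configuration $C(t)$ is given by $\lambda(v)$, the number of robots at node $v$ at time $t$, and $\mu(v)$, the capacity of $v$ if $v$ is a parking node and $0$ otherwise. A grid automorphism $\phi$ is a symmetry of the configuration if $\lambda(\phi(v))=\lambda(v)$ and $\mu(\phi(v))=\mu(v)$ for all $v$, and a symmetry of the parking nodes if $\mu(\phi(v))=\mu(v)$ for all $v$ (so symmetric parking nodes have equal capacities). Symmetries are reflections (about horizontal, vertical or diagonal axes through nodes or edge midpoints) and rotations (by $90^\circ$ or $180^\circ$). The parking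 problem: reach in finite time a configuration where every $p_i$ holds exactly $k_i$ robots, all robots are stationary, and any robot performing a Look decides not to move. It is unsolvable from $C(0)$ if no deterministic distributed algorithm guarantees this from $C(0)$ under all admissible schedules. *)

theory Defs
  imports Main
begin

type_synonym node = "int \<times> int"

definition vadd :: "node \<Rightarrow> node \<Rightarrow> node" where
  "vadd p q = (fst p + fst q, snd p + snd q)"

text \<open>A local coordinate frame of a disoriented robot: one of the 8 grid isometries
  fixing the origin (optional swap of axes, optional sign flips). Frames may differ
  between robots (no common axes, no common chirality).\<close>
type_synonym frame = "bool \<times> bool \<times> bool"

definition frame_apply :: "frame \<Rightarrow> node \<Rightarrow> node" where
  "frame_apply f v =
     (let (sw, sx, sy) = f;
          (a, b) = (if sw then (snd v, fst v) else (fst v, snd v))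
      in (if sx then - a else a, if sy then - b else b))"

definition cnt :: "nat \<Rightarrow> (nat \<Rightarrow> node) \<Rightarrow> node \<Rightarrow> nat" where
  "cnt n pos v = card {r. r < n \<and> pos r = v}"

text \<open>A snapshot as seen by a robot: robot counts and capacities, in the robot's
  local frame with the robot at the origin.\<close>
type_synonym view = "(node \<Rightarrow> nat) \<times> (node \<Rightarrow> nat)"

definition view_of :: "(node \<Rightarrow> nat) \<Rightarrow> nat \<Rightarrow> (nat \<Rightarrow> node) \<Rightarrow> frame \<Rightarrow> node \<Rightarrow> view" where
  "view_of \<mu> n pos f p =
     ((\<lambda>v. cnt n pos (vadd p (frame_apply f v))), (\<lambda>v. \<mu> (vadd p (frame_apply f v))))"

text \<open>A deterministic algorithm (anonymous, oblivious, identical robots) maps a view to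
  a move in local coordinates: stay or one of the four neighbours.\<close>
type_synonym algo = "view \<Rightarrow> node"

definition valid_alg :: "algo \<Rightarrow> bool" where
  "valid_alg A \<longleftrightarrow> (\<forall>x. A x \<in> {(0,0), (1,0), (-1,0), (0,1), (0,-1)})"

text \<open>Execution state: positions and, for each robot, the pending global move
  (Some d after a Look whose Move has not happened yet; None if idle).\<close>
type_synonym state = "(nat \<Rightarrow> node) \<times> (nat \<Rightarrow> node option)"

definition step :: "algo \<Rightarrow> (node \<Rightarrow> nat) \<Rightarrow> nat \<Rightarrow> (nat \<Rightarrow> frame) \<Rightarrow> nat \<Rightarrow> state \<Rightarrow> state" where
  "step A \<mu> n fr r s =
     (let (pos, pend) = s in
      case pend r of
        None \<Rightarrow> (pos, pend(r := Some (frame_apply (fr r) (A (view_of \<mu> n pos (fr r) (pos r))))))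
      | Some d \<Rightarrow> (pos(r := vadd (pos r) d), pend(r := None)))"

text \<open>Asynchronous execution: at each event, the scheduled robot either performs
  Look+Compute (if idle) or its Move (if a move is pending).\<close>
primrec exec :: "algo \<Rightarrow> (node \<Rightarrow> nat) \<Rightarrow> nat \<Rightarrow> (nat \<Rightarrow> frame) \<Rightarrow> (nat \<Rightarrow> node)
                 \<Rightarrow> (nat \<Rightarrow> nat) \<Rightarrow> nat \<Rightarrow> state" where
  "exec A \<mu> n fr pos0 sch 0 = (pos0, (\<lambda>r. None))"
| "exec A \<mu> n fr pos0 sch (Suc t) = step A \<mu> n fr (sch t) (exec A \<mu> n fr pos0 sch t)"

definition fair :: "nat \<Rightarrow> (nat \<Rightarrow> nat) \<Rightarrow> bool" where
  "fair n sch \<longleftrightarrow> (\<forall>t. sch t < n) \<and> (\<forall>r<n. \<forall>t. \<exists>t'\<ge>t. sch t' = r)"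

definition terminal :: "algo \<Rightarrow> (node \<Rightarrow> nat) \<Rightarrow> nat \<Rightarrow> (nat \<Rightarrow> frame) \<Rightarrow> state \<Rightarrow> bool" where
  "terminal A \<mu> n fr s =
     (let (pos, pend) = s in
        (\<forall>v. cnt n pos v = \<mu> v) \<and>
        (\<forall>r<n. pend r = None \<or> pend r = Some (0,0)) \<and>
        (\<forall>r<n. A (view_of \<mu> n pos (fr r) (pos r)) = (0,0)))"

definition solvable :: "(node \<Rightarrow> nat) \<Rightarrow> nat \<Rightarrow> (nat \<Rightarrow> node) \<Rightarrow> bool" where
  "solvable \<mu> n pos0 \<longleftrightarrow>
     (\<exists>A. valid_alg A \<and>
        (\<forall>fr sch. fair n sch \<longrightarrow> (\<exists>t. terminal A \<mu> n fr (exec A \<mu> n fr pos0 sch t))))"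

text \<open>Reflections of the grid that are grid automorphisms: about vertical, horizontal
  axes (through nodes or edge midpoints) and diagonal axes.\<close>
definition grid_reflections :: "(node \<Rightarrow> node) set" where
  "grid_reflections =
     {\<phi>. \<exists>a::int. \<phi> = (\<lambda>(x,y). (a - x, y)) \<or> \<phi> = (\<lambda>(x,y). (x, a - y))
               \<or> \<phi> = (\<lambda>(x,y). (y + a, x - a)) \<or> \<phi> = (\<lambda>(x,y). (a - y, a - x))}"

end

theory Submission
  imports Defs
begin

text \<open>The adversary gives every robot a partner, its mirror image (never itself, as no robot
  lies on the axis), and equips the two with mirrored local frames; it then runs the robots in
  synchronous rounds (all Looks, then all Moves, in round-robin order). By induction on the
  rounds, partners always see mirrored snapshots and make mirrored moves, so the configuration
  stays symmetric and every node on the axis holds an even number of robots. In a terminal state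
  of this schedule the robots that have not yet moved in the current round have computed null
  moves, so the positions are those after some round: a node on the axis with odd capacity is
  never filled exactly.\<close>

lemma frame_apply_identity [simp]: "frame_apply (False, False, False) v = v"
  by (simp add: frame_apply_def)

lemma grid_reflection_involutive:
  assumes "\<phi> \<in> grid_reflections"
  shows "\<phi> (\<phi> x) = x"
  using assms unfolding grid_reflections_def by (auto split: prod.splits)

lemma grid_reflection_frame:
  assumes "\<phi> \<in> grid_reflections"
  obtains L where "\<And>p w. \<phi> (vadd p w) = vadd (\<phi> p) (frame_apply L w)"
    and "\<And>v. frame_apply L (frame_apply L v) = v"
proof -
  obtain a :: int where "\<phi> = (\<lambda>(x,y). (a - x, y)) \<or> \<phi> = (\<lambda>(x,y). (x, a - y))
      \<or> \<phi> = (\<lambda>(x,y). (y + a, x - a)) \<or> \<phi> = (\<lambda>(x,y). (a - y, a - x))"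
    using assms unfolding grid_reflections_def by blast
  then show thesis
  proof (elim disjE)
    assume "\<phi> = (\<lambda>(x,y). (a - x, y))"
    then show thesis by (intro that[of "(False, True, False)"]) (auto simp: vadd_def frame_apply_def)
  next
    assume "\<phi> = (\<lambda>(x,y). (x, a - y))"
    then show thesis by (intro that[of "(False, False, True)"]) (auto simp: vadd_def frame_apply_def)
  next
    assume "\<phi> = (\<lambda>(x,y). (y + a, x - a))"
    then show thesis by (intro that[of "(True, False, False)"]) (auto simp: vadd_def frame_apply_def)
  next
    assume "\<phi> = (\<lambda>(x,y). (a - y, a - x))"
    then show thesis by (intro that[of "(True, True, True)"]) (auto simp: vadd_def frame_apply_def)
  qed
qed

lemma even_card_fixpoint_free_involution:
  assumes "finite S"
    and "\<And>x. x \<in> S \<Longrightarrow> \<sigma> x \<in> S" "\<And>x. x \<in> S \<Longrightarrow> \<sigma> x \<noteq> x" "\<And>x. x \<in> S \<Longrightarrow> \<sigma> (\<sigma> x) = x"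
  shows "even (card S)"
  using assms
proof (induction "card S" arbitrary: S rule: less_induct)
  case less
  show ?case
  proof (cases "S = {}")
    case False
    then obtain x where x: "x \<in> S" by blast
    let ?S' = "S - {x, \<sigma> x}"
    have orbit: "{x, \<sigma> x} \<subseteq> S" "card {x, \<sigma> x} = 2"
      using x less.prems(2,3) by (auto simp: card_2_iff)
    then have card_S: "card S = card ?S' + 2"
      using less.prems(1) card_mono[OF less.prems(1) orbit(1)] by (simp add: card_Diff_subset)
    have "even (card ?S')"
    proof (rule less.hyps)
      show "card ?S' < card S" and "finite ?S'" using card_S less.prems(1) by simp_all
    next
      fix y
      assume "y \<in> ?S'"
      then have y: "y \<in> S" "y \<noteq> x" "y \<noteq> \<sigma> x" by auto
      then have "\<sigma> y \<noteq> x" and "\<sigma> y \<noteq> \<sigma> x"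
        using less.prems(4)[OF y(1)] less.prems(4)[OF x] by metis+
      then show "\<sigma> y \<in> ?S'" using less.prems(2)[OF y(1)] by simp
      show "\<sigma> y \<noteq> y" and "\<sigma> (\<sigma> y) = y" using less.prems(3,4)[OF y(1)] by simp_all
    qed
    then show ?thesis using card_S by presburger
  qed simp
qed

lemma cnt_cong:
  assumes "\<And>r. r < n \<Longrightarrow> P r = Q r"
  shows "cnt n P = cnt n Q"
proof
  fix v
  show "cnt n P v = cnt n Q v"
    unfolding cnt_def by (rule arg_cong[where f = card]) (use assms in auto)
qed

definition mirror_pairing :: "nat \<Rightarrow> (nat \<Rightarrow> nat) \<Rightarrow> (node \<Rightarrow> node) \<Rightarrow> (nat \<Rightarrow> node) \<Rightarrow> bool" where
  "mirror_pairing n \<sigma> \<phi> P \<longleftrightarrow> (\<forall>r<n. \<sigma> r < n \<and> \<sigma> (\<sigma> r) = r \<and> \<sigma> r \<noteq> r \<and> P (\<sigma> r) = \<phi> (P r))"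

lemma cnt_mirror:
  assumes "mirror_pairing n \<sigma> \<phi> P" and "\<And>x. \<phi> (\<phi> x) = x"
  shows "cnt n P (\<phi> x) = cnt n P x"
proof -
  have "bij_betw \<sigma> {r. r < n \<and> P r = x} {r. r < n \<and> P r = \<phi> x}"
    by (rule bij_betw_byWitness[where f' = \<sigma>])
      (use assms(1) assms(2)[of x] in \<open>auto simp: mirror_pairing_def\<close>)
  then show ?thesis unfolding cnt_def by (simp add: bij_betw_same_card)
qed

lemma even_cnt_on_axis:
  assumes "mirror_pairing n \<sigma> \<phi> P" and "\<phi> p = p"
  shows "even (cnt n P p)"
  unfolding cnt_def
  by (rule even_card_fixpoint_free_involution[where \<sigma> = \<sigma>])
    (use assms in \<open>auto simp: mirror_pairing_def\<close>)

lemma mirror_pairing_initial: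
  assumes "inj_on pos0 {..<n}" and "\<And>v. cnt n pos0 (\<phi> v) = cnt n pos0 v"
    and "\<And>r. r < n \<Longrightarrow> \<phi> (pos0 r) \<noteq> pos0 r" and "\<And>x. \<phi> (\<phi> x) = x"
  obtains \<sigma> where "mirror_pairing n \<sigma> \<phi> pos0"
proof -
  have "\<exists>r'. r' < n \<and> pos0 r' = \<phi> (pos0 r)" if "r < n" for r
  proof -
    have "cnt n pos0 (pos0 r) > 0"
      unfolding cnt_def using that by (subst card_gt_0_iff) auto
    then have "cnt n pos0 (\<phi> (pos0 r)) > 0" using assms(2) by simp
    then show ?thesis
      unfolding cnt_def by (metis (mono_tags, lifting) card.empty empty_Collect_eq less_irrefl)
  qed
  then obtain \<sigma> where \<sigma>: "\<And>r. r < n \<Longrightarrow> \<sigma> r < n \<and> pos0 (\<sigma> r) = \<phi> (pos0 r)" by metis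
  have "\<sigma> (\<sigma> r) = r" if "r < n" for r
    using assms(1,4) \<sigma>[OF that] \<sigma>[of "\<sigma> r"] that unfolding inj_on_def by auto
  moreover have "\<sigma> r \<noteq> r" if "r < n" for r
    using assms(3) \<sigma> that by metis
  ultimately show thesis using \<sigma> by (intro that[of \<sigma>]) (simp add: mirror_pairing_def)
qed

definition round_robin :: "nat \<Rightarrow> nat \<Rightarrow> nat" where
  "round_robin n t = t mod n"

lemma fair_round_robin:
  assumes "0 < n"
  shows "fair n (round_robin n)"
  unfolding fair_def round_robin_def
proof (intro conjI allI impI)
  fix r t :: nat
  assume "r < n"
  then show "\<exists>t'\<ge>t. t' mod n = r"
    by (intro exI[of _ "r + t * n"]) (use assms in \<open>auto intro: trans_le_add2\<close>)
qed (use assms in simp)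

lemma round_robin_offset: "k < n \<Longrightarrow> round_robin n (q * n + k) = k"
  by (simp add: round_robin_def)

context
  fixes A :: algo and \<mu> :: "node \<Rightarrow> nat" and n :: nat and fr :: "nat \<Rightarrow> frame"
begin

definition move_of :: "(nat \<Rightarrow> node) \<Rightarrow> nat \<Rightarrow> node" where
  "move_of P r = frame_apply (fr r) (A (view_of \<mu> n P (fr r) (P r)))"

primrec sync_pos :: "(nat \<Rightarrow> node) \<Rightarrow> nat \<Rightarrow> nat \<Rightarrow> node" where
  "sync_pos p0 0 = p0"
| "sync_pos p0 (Suc m) =
     (\<lambda>r. if r < n then vadd (sync_pos p0 m r) (move_of (sync_pos p0 m) r) else sync_pos p0 m r)"

lemma exec_round_robin_looks:
  assumes "exec A \<mu> n fr p0 (round_robin n) (2*n*m) = (sync_pos p0 m, \<lambda>_. None)" and "k \<le> n"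
  shows "exec A \<mu> n fr p0 (round_robin n) (2*n*m + k) =
    (sync_pos p0 m, \<lambda>r. if r < k then Some (move_of (sync_pos p0 m) r) else None)"
  using assms(2)
proof (induction k)
  case 0
  then show ?case using assms(1) by simp
next
  case (Suc k)
  have "round_robin n (2*n*m + k) = round_robin n ((2*m) * n + k)"
    by (simp add: algebra_simps)
  also have "\<dots> = k" using Suc.prems by (intro round_robin_offset) simp
  finally show ?case using Suc by (simp add: step_def move_of_def fun_eq_iff)
qed

lemma exec_round_robin_moves:
  assumes "exec A \<mu> n fr p0 (round_robin n) (2*n*m + n) =
      (sync_pos p0 m, \<lambda>r. if r < n then Some (move_of (sync_pos p0 m) r) else None)"
    and "j \<le> n"
  shows "exec A \<mu> n fr p0 (round_robin n) (2*n*m + n + j) =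
    (\<lambda>r. if r < j then sync_pos p0 (Suc m) r else sync_pos p0 m r,
     \<lambda>r. if j \<le> r \<and> r < n then Some (move_of (sync_pos p0 m) r) else None)"
  using assms(2)
proof (induction j)
  case 0
  then show ?case using assms(1) by simp
next
  case (Suc j)
  have "round_robin n (2*n*m + n + j) = round_robin n ((2*m + 1) * n + j)"
    by (simp add: algebra_simps)
  also have "\<dots> = j" using Suc.prems by (intro round_robin_offset) simp
  finally show ?case using Suc by (auto simp: step_def fun_eq_iff)
qed

lemma exec_round_robin_rounds:
  assumes "0 < n"
  shows "exec A \<mu> n fr p0 (round_robin n) (2*n*m) = (sync_pos p0 m, \<lambda>_. None)"
proof (induction m)
  case (Suc m)
  have "exec A \<mu> n fr p0 (round_robin n) (2*n*Suc m) =
    (\<lambda>r. if r < n then sync_pos p0 (Suc m) r else sync_pos p0 m r,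
     \<lambda>r. if n \<le> r \<and> r < n then Some (move_of (sync_pos p0 m) r) else None)"
    using exec_round_robin_moves[OF exec_round_robin_looks[OF Suc order.refl] order.refl]
    by (simp add: algebra_simps)
  then show ?case by (simp add: fun_eq_iff)
qed simp

lemma terminal_round_robin_sync:
  assumes "0 < n" and "terminal A \<mu> n fr (exec A \<mu> n fr p0 (round_robin n) t)"
  obtains m where "cnt n (sync_pos p0 m) = \<mu>"
proof -
  define m k where "m = t div (2*n)" and "k = t mod (2*n)"
  have t: "t = 2*n*m + k" and "k < 2*n"
    using assms(1) by (simp_all add: m_def k_def)
  have round: "exec A \<mu> n fr p0 (round_robin n) (2*n*m) = (sync_pos p0 m, \<lambda>_. None)"
    by (rule exec_round_robin_rounds[OF assms(1)])
  show thesis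
  proof (cases "k \<le> n")
    case True
    then have "exec A \<mu> n fr p0 (round_robin n) t =
      (sync_pos p0 m, \<lambda>r. if r < k then Some (move_of (sync_pos p0 m) r) else None)"
      using exec_round_robin_looks[OF round] t by simp
    then show thesis
      using assms(2) by (intro that[of m]) (simp add: terminal_def fun_eq_iff)
  next
    case False
    define j where "j = k - n"
    let ?P = "\<lambda>r. if r < j then sync_pos p0 (Suc m) r else sync_pos p0 m r"
    have "j \<le> n" and "t = 2*n*m + n + j"
      using False \<open>k < 2*n\<close> t by (simp_all add: j_def)
    then have "exec A \<mu> n fr p0 (round_robin n) t =
      (?P, \<lambda>r. if j \<le> r \<and> r < n then Some (move_of (sync_pos p0 m) r) else None)"
      using exec_round_robin_moves[OF exec_round_robin_looks[OF round order.refl]] by simp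
    with assms(2) have counts: "cnt n ?P = \<mu>"
      and idle: "\<And>r. j \<le> r \<Longrightarrow> r < n \<Longrightarrow> move_of (sync_pos p0 m) r = (0, 0)"
      by (auto simp: terminal_def fun_eq_iff simp del: split_paired_All)
    have "cnt n ?P = cnt n (sync_pos p0 (Suc m))"
      by (rule cnt_cong) (simp add: idle vadd_def)
    then show thesis using counts by (intro that[of "Suc m"]) simp
  qed
qed

context
  fixes \<sigma> :: "nat \<Rightarrow> nat" and \<phi> :: "node \<Rightarrow> node" and L :: frame
  assumes \<phi>_involutive: "\<And>x. \<phi> (\<phi> x) = x"
    and \<phi>_vadd: "\<And>p w. \<phi> (vadd p w) = vadd (\<phi> p) (frame_apply L w)"
    and \<mu>_symmetric: "\<And>v. \<mu> (\<phi> v) = \<mu> v"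
    and frames_mirrored:
      "\<And>r v. r < n \<Longrightarrow> frame_apply (fr (\<sigma> r)) v = frame_apply L (frame_apply (fr r) v)"
begin

lemma move_of_mirror:
  assumes "mirror_pairing n \<sigma> \<phi> P" and "r < n"
  shows "move_of P (\<sigma> r) = frame_apply L (move_of P r)"
proof -
  have "view_of \<mu> n P (fr (\<sigma> r)) (P (\<sigma> r)) = view_of \<mu> n P (fr r) (P r)"
    using assms unfolding view_of_def mirror_pairing_def
    by (simp add: frames_mirrored \<phi>_vadd[symmetric] cnt_mirror[OF assms(1) \<phi>_involutive]
        \<mu>_symmetric)
  then show ?thesis unfolding move_of_def by (simp add: frames_mirrored assms(2))
qed

lemma mirror_pairing_sync_pos:
  assumes "mirror_pairing n \<sigma> \<phi> p0"
  shows "mirror_pairing n \<sigma> \<phi> (sync_pos p0 m)"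
proof (induction m)
  case (Suc m)
  then show ?case
    using move_of_mirror[OF Suc] unfolding mirror_pairing_def by (simp add: \<phi>_vadd)
qed (use assms in simp)

end

end

definition mirror_frames :: "(nat \<Rightarrow> nat) \<Rightarrow> frame \<Rightarrow> nat \<Rightarrow> frame" where
  "mirror_frames \<sigma> L r = (if r \<le> \<sigma> r then (False, False, False) else L)"

lemma mirror_frames_mirrored:
  assumes "\<sigma> (\<sigma> r) = r" and "\<sigma> r \<noteq> r" and "\<And>v. frame_apply L (frame_apply L v) = v"
  shows "frame_apply (mirror_frames \<sigma> L (\<sigma> r)) v =
    frame_apply L (frame_apply (mirror_frames \<sigma> L r) v)"
  using assms by (cases "r < \<sigma> r") (auto simp: mirror_frames_def)

theorem lemma3:
  fixes \<mu> :: "node \<Rightarrow> nat" and n :: nat and pos0 :: "nat \<Rightarrow> node" and \<phi> :: "node \<Rightarrow> node"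
  assumes parking_finite: "finite {v. \<mu> v > 0}"
    and parking_nonempty: "{v. \<mu> v > 0} \<noteq> {}"
    and n_def: "n = (\<Sum>v\<in>{v. \<mu> v > 0}. \<mu> v)"
    and distinct_init: "inj_on pos0 {..<n}"
    and refl: "\<phi> \<in> grid_reflections"
    and parking_sym: "\<forall>v. \<mu> (\<phi> v) = \<mu> v"
    and unique_line: "\<forall>\<psi>\<in>grid_reflections. (\<forall>v. \<mu> (\<psi> v) = \<mu> v) \<longrightarrow> \<psi> = \<phi>"
    and config_sym: "\<forall>v. cnt n pos0 (\<phi> v) = cnt n pos0 v"
    and no_robot_on_axis: "\<forall>r<n. \<phi> (pos0 r) \<noteq> pos0 r"
    and parking_on_axis: "\<exists>p. \<phi> p = p \<and> \<mu> p > 0"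
    and odd_cap: "\<exists>p. \<phi> p = p \<and> \<mu> p > 0 \<and> odd (\<mu> p)"
  shows "\<not> solvable \<mu> n pos0"
proof
  assume "solvable \<mu> n pos0"
  then obtain A
    where A: "\<And>fr sch. fair n sch \<Longrightarrow> \<exists>t. terminal A \<mu> n fr (exec A \<mu> n fr pos0 sch t)"
    unfolding solvable_def by blast
  note \<phi>_involutive = grid_reflection_involutive[OF refl]
  obtain L where \<phi>_vadd: "\<And>p w. \<phi> (vadd p w) = vadd (\<phi> p) (frame_apply L w)"
    and L_involutive: "\<And>v. frame_apply L (frame_apply L v) = v"
    using grid_reflection_frame[OF refl] by blast
  obtain p where p: "\<phi> p = p" "\<mu> p > 0" "odd (\<mu> p)" using odd_cap by blast
  have "\<mu> p \<le> n" unfolding n_def using p parking_finite by (intro member_le_sum) auto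
  with p have "0 < n" by simp
  obtain \<sigma> where \<sigma>: "mirror_pairing n \<sigma> \<phi> pos0"
    using mirror_pairing_initial[OF distinct_init config_sym[rule_format]
        no_robot_on_axis[rule_format] \<phi>_involutive] by blast
  let ?fr = "mirror_frames \<sigma> L"
  obtain t where "terminal A \<mu> n ?fr (exec A \<mu> n ?fr pos0 (round_robin n) t)"
    using A fair_round_robin[OF \<open>0 < n\<close>] by blast
  then obtain m where filled: "cnt n (sync_pos A \<mu> n ?fr pos0 m) = \<mu>"
    using terminal_round_robin_sync[OF \<open>0 < n\<close>] by blast
  have "mirror_pairing n \<sigma> \<phi> (sync_pos A \<mu> n ?fr pos0 m)"
  proof (rule mirror_pairing_sync_pos[where \<phi> = \<phi> and L = L and \<mu> = \<mu>, OF
      \<phi>_involutive \<phi>_vadd parking_sym[rule_format] _ \<sigma>])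
    fix r v
    assume "r < n"
    with \<sigma> show "frame_apply (?fr (\<sigma> r)) v = frame_apply L (frame_apply (?fr r) v)"
      by (intro mirror_frames_mirrored L_involutive) (auto simp: mirror_pairing_def)
  qed
  from even_cnt_on_axis[OF this p(1)] show False
    using filled p(3) by simp
qed

end
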